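(* Fix $n\in\mathbb N$, a noise level $\varepsilon\in[0,1)$ and a target risk level $\bar q\in[0,1]$. Let $G$ be the complete graph on $n$ vertices. Under the Water-Filling Strategy $\psi^{wf}_{\bar q}$, the goal-hitting time $T^{wf}$ and intentional goal-hitting time $T^{wf}_{IH}$ satisfy $$\mathbb E(T^{wf})\le\mathbb E(T^{wf}_{IH})\le\frac1{2\bar q}+\frac12+\frac{\bar q\varepsilon}{2(1-\varepsilon)^2}.$$
   Context: Model: neighborhoods $\mathcal N(v)$; in the complete graph on $n$ vertices every vertex is adjacent to every vertex including itself, so $|\mathcal N(v)|=n$. Goal $D$ uniform on vertices; fixed initial vertex; horizon $K$; $B_1,\dots,B_K$ i.i.d. Bernoulli$(1-\varepsilon)$ independent of all else. The agent in state $X_t$ chooses $a_t\in\mathcal N(X_t)$; if $B_t=1$, $X_{t+1}=a_t$, else $X_{t+1}$ uniform on $\mathcal N(X_t)$. $T=\inf\{t\ge1:X_t=D\}$; if not reached by $K$, set $X_{K+1}=D$, $B_K=1$. Random-Step: $a_t$ uniform on $\mathcal N(X_t)$; Goal-Attempt: $a_t=D$ (only if $D\in\mathcal N(X_t)$). $T_{IH}=\inf\{t\ge1:$ Goal-Attempt at $t-1$ and $B_{t-1}=1\}$ ($\le K+1$). $L(t)=\sum_{s\le t}\mathbb I(X_s\in\mathcal N(D))$. Water-Filling Strategy $\psi^{wf}_{\bar q}$: $t^*=\lceil1/\bar q-\varepsilon/(1-\varepsilon)\rceil$ (standing assumption: $1/\bar q-\varepsilon/(1-\varepsilon)$ is an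 integer), $p_t=\frac{\bar q}{1-\varepsilon}(1-t\bar q)^{-1}$ for $0\le t<t^*-1$, $p_t=1$ otherwise; at time $t$, if $X_t\in\mathcal N(D)$ and $T_{IH}>t$, Goal-Attempt with probability $p_{L(t)}$, else Random-Step; otherwise Random-Step. *)

theory Defs
  imports "HOL-Probability.Probability"
begin

text \<open>Vertices are 0..<n. A graph is given by its neighbourhood map N.
  The complete graph (every vertex adjacent to every vertex, including itself).\<close>
definition complete_nbhd :: "nat \<Rightarrow> nat \<Rightarrow> nat set" where
  "complete_nbhd n v = {..<n}"

definition wf_tstar :: "real \<Rightarrow> real \<Rightarrow> int" where
  "wf_tstar q eps = \<lceil>1 / q - eps / (1 - eps)\<rceil>"

definition wf_p :: "real \<Rightarrow> real \<Rightarrow> nat \<Rightarrow> real" where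
  "wf_p q eps t = (if int t < wf_tstar q eps - 1
                   then q / (1 - eps) * inverse (1 - real t * q) else 1)"

text \<open>State at time t: (X_t, L(t), first hitting time found so far, first intentional
  hitting time found so far).\<close>
type_synonym wf_state = "nat \<times> nat \<times> nat option \<times> nat option"

definition wf_step ::
  "(nat \<Rightarrow> nat set) \<Rightarrow> real \<Rightarrow> real \<Rightarrow> nat \<Rightarrow> nat \<Rightarrow> wf_state \<Rightarrow> wf_state pmf" where
  "wf_step N q eps d t s =
     (case s of (x, L, Th, Tih) \<Rightarrow>
       bind_pmf (if x \<in> N d \<and> Tih = None then bernoulli_pmf (wf_p q eps L) else return_pmf False)
         (\<lambda>attempt.
       bind_pmf (if attempt then return_pmf d else pmf_of_set (N x))
         (\<lambda>a.
       bind_pmf (bernoulli_pmf (1 - eps))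
         (\<lambda>b.
       bind_pmf (if b then return_pmf a else pmf_of_set (N x))
         (\<lambda>x'.
       return_pmf (x',
                   L + (if x' \<in> N d then 1 else 0),
                   (if Th = None \<and> x' = d then Some (Suc t) else Th),
                   (if Tih = None \<and> attempt \<and> b then Some (Suc t) else Tih)))))))"

primrec wf_run ::
  "(nat \<Rightarrow> nat set) \<Rightarrow> real \<Rightarrow> real \<Rightarrow> nat \<Rightarrow> nat \<Rightarrow> nat \<Rightarrow> wf_state \<Rightarrow> wf_state pmf" where
  "wf_run N q eps d 0 t s = return_pmf s"
| "wf_run N q eps d (Suc k) t s = bind_pmf (wf_step N q eps d t s) (\<lambda>s'. wf_run N q eps d k (Suc t) s')"

text \<open>Joint law of (T, T_IH): goal D uniform on the n vertices, initial vertex x0 at time 0,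
  horizon K (transitions at times 0..K-1; if not reached by K, the time is set to K+1).\<close>
definition wf_times ::
  "(nat \<Rightarrow> nat set) \<Rightarrow> nat \<Rightarrow> real \<Rightarrow> real \<Rightarrow> nat \<Rightarrow> nat \<Rightarrow> (nat \<times> nat) pmf" where
  "wf_times N n q eps x0 K =
     bind_pmf (pmf_of_set {..<n}) (\<lambda>d.
     map_pmf (\<lambda>(x, L, Th, Tih).
                (case Th of Some t \<Rightarrow> t | None \<Rightarrow> Suc K,
                 case Tih of Some t \<Rightarrow> t | None \<Rightarrow> Suc K))
             (wf_run N q eps d K 0 (x0, 0, None, None)))"

end

theory Submission
  imports Defs
begin

(* On the complete graph every vertex neighbours the goal, so L(t) = t and, until the first
   intentional hit, the goal is attempted at time t with probability p_t and reached with
   probability h_t = p_t (1 - eps).  The water-filling choice of p_t makes h_t = q / (1 - t q) for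
   t < t* - 1, so that P(T_IH > t) = 1 - t q decreases linearly; afterwards h_t = 1 - eps and the
   tail is geometric.  Summing this survival function gives the bound, which is proved through
   the backward recursion V t = 1 + (1 - h_t) V (t + 1) for the expected remaining time.
   T <= T_IH holds pointwise because an intentional hit lands on the goal. *)

lemma bind_bernoulli_pmf_conj:
  assumes "0 \<le> p" "p \<le> 1" "0 \<le> r" "r \<le> 1"
  shows "bind_pmf (bernoulli_pmf p) (\<lambda>a. bind_pmf (bernoulli_pmf r) (\<lambda>b. f (a \<and> b)))
       = bind_pmf (bernoulli_pmf (p * r)) f"
proof (rule pmf_eqI)
  fix x
  have "p * r \<le> 1" using assms by (simp add: mult_le_one)
  then show "pmf (bind_pmf (bernoulli_pmf p) (\<lambda>a. bind_pmf (bernoulli_pmf r) (\<lambda>b. f (a \<and> b)))) x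
           = pmf (bind_pmf (bernoulli_pmf (p * r)) f) x"
    using assms by (simp add: pmf_bind algebra_simps)
qed

lemma expectation_bind_bernoulli_pmf:
  fixes h :: "'a \<Rightarrow> real"
  assumes "0 \<le> p" "p \<le> 1" "\<And>b. finite (set_pmf (f b))"
  shows "measure_pmf.expectation (bind_pmf (bernoulli_pmf p) f) h
       = p * measure_pmf.expectation (f True) h + (1 - p) * measure_pmf.expectation (f False) h"
  using assms by (subst pmf_expectation_bind[of UNIV]) (auto simp: UNIV_bool)

(* Independent trials at times t, ..., t + k - 1; a first success at time s is reported as
   Some (Suc s), the time at which its effect is observed. *)
primrec first_success :: "(nat \<Rightarrow> real) \<Rightarrow> nat \<Rightarrow> nat \<Rightarrow> nat option pmf" where
  "first_success h 0 t = return_pmf None"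
| "first_success h (Suc k) t =
     bind_pmf (bernoulli_pmf (h t))
       (\<lambda>b. if b then return_pmf (Some (Suc t)) else first_success h k (Suc t))"

lemma finite_set_pmf_first_success: "finite (set_pmf (first_success h k t))"
  by (induction k arbitrary: t) auto

lemma expectation_first_success_le:
  assumes "\<And>s. 0 \<le> h s" "\<And>s. h s \<le> 1" "\<And>s. 0 \<le> V s"
    and "\<And>s. 1 + (1 - h s) * V (Suc s) \<le> V s"
  shows "measure_pmf.expectation (first_success h k t)
           (\<lambda>r. real (case r of Some s \<Rightarrow> s | None \<Rightarrow> Suc (t + k))) \<le> real t + V t"
proof (induction k arbitrary: t)
  case 0
  have "1 \<le> V t"
    using assms(4)[of t] mult_nonneg_nonneg[OF _ assms(3)[of "Suc t"], of "1 - h t"] assms(2)[of t]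
    by linarith
  then show ?case by simp
next
  case (Suc k)
  let ?E = "measure_pmf.expectation (first_success h k (Suc t))
              (\<lambda>r. real (case r of Some s \<Rightarrow> s | None \<Rightarrow> Suc (t + Suc k)))"
  have IH: "?E \<le> real (Suc t) + V (Suc t)"
    \<comment> \<open>simp does not rewrite inside the branches of a case expression\<close>
    using Suc.IH[of "Suc t"] unfolding add_Suc add_Suc_right .
  have "measure_pmf.expectation (first_success h (Suc k) t)
          (\<lambda>r. real (case r of Some s \<Rightarrow> s | None \<Rightarrow> Suc (t + Suc k)))
      = h t * real (Suc t) + (1 - h t) * ?E"
    using assms(1,2) by (simp add: expectation_bind_bernoulli_pmf finite_set_pmf_first_success)
  also have "\<dots> \<le> h t * real (Suc t) + (1 - h t) * (real (Suc t) + V (Suc t))"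
    using IH assms(2)[of t] by (intro add_left_mono mult_left_mono) auto
  also have "\<dots> = real t + (1 + (1 - h t) * V (Suc t))"
    by (simp add: algebra_simps)
  also have "\<dots> \<le> real t + V t"
    using assms(4) by simp
  finally show ?case .
qed

lemma set_pmf_wf_step:
  assumes "s' \<in> set_pmf (wf_step N q eps d t (x, L, Th, Tih))"
  obtains x' hit where "x' = d \<or> x' \<in> set_pmf (pmf_of_set (N x))" and "hit \<longrightarrow> x' = d"
    and "s' = (x', L + (if x' \<in> N d then 1 else 0), if Th = None \<and> x' = d then Some (Suc t) else Th,
               if Tih = None \<and> hit then Some (Suc t) else Tih)"
proof -
  from assms obtain att a b x' where
    a: "a \<in> set_pmf (if att then return_pmf d else pmf_of_set (N x))"
    and x': "x' \<in> set_pmf (if b then return_pmf a else pmf_of_set (N x))"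
    and s': "s' = (x', L + (if x' \<in> N d then 1 else 0), if Th = None \<and> x' = d then Some (Suc t) else Th,
                   if Tih = None \<and> att \<and> b then Some (Suc t) else Tih)"
    unfolding wf_step_def by (auto simp del: set_pmf_bernoulli)
  have "x' = d \<or> x' \<in> set_pmf (pmf_of_set (N x))" "att \<and> b \<longrightarrow> x' = d"
    using a x' by (auto split: if_splits)
  with s' show ?thesis using that by auto
qed

definition hit_times_ordered :: "nat \<Rightarrow> wf_state \<Rightarrow> bool" where
  "hit_times_ordered t s \<longleftrightarrow> (case s of (_, _, Th, Tih) \<Rightarrow>
     (\<forall>a. Th = Some a \<longrightarrow> a \<le> t) \<and> (\<forall>b. Tih = Some b \<longrightarrow> b \<le> t \<and> (\<exists>a\<le>b. Th = Some a)))"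

lemma hit_times_ordered_wf_step:
  assumes "hit_times_ordered t s" "s' \<in> set_pmf (wf_step N q eps d t s)"
  shows "hit_times_ordered (Suc t) s'"
proof -
  obtain x L Th Tih where s: "s = (x, L, Th, Tih)" by (cases s)
  from assms(2) obtain x' hit where "hit \<longrightarrow> x' = d"
    and "s' = (x', L + (if x' \<in> N d then 1 else 0), if Th = None \<and> x' = d then Some (Suc t) else Th,
               if Tih = None \<and> hit then Some (Suc t) else Tih)"
    unfolding s by (rule set_pmf_wf_step)
  then show ?thesis
    using assms(1) unfolding s hit_times_ordered_def by (auto simp: le_Suc_eq)
qed

lemma hit_times_ordered_wf_run:
  "hit_times_ordered t s \<Longrightarrow> s' \<in> set_pmf (wf_run N q eps d k t s) \<Longrightarrow> hit_times_ordered (t + k) s'"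
proof (induction k arbitrary: t s)
  case (Suc k)
  then obtain s1 where "s1 \<in> set_pmf (wf_step N q eps d t s)" "s' \<in> set_pmf (wf_run N q eps d k (Suc t) s1)"
    by auto
  then show ?case
    using Suc.IH[of "Suc t" s1] hit_times_ordered_wf_step[OF Suc.prems(1)] by simp
qed simp

lemma hit_le_intentional_hit_wf_times:
  assumes "p \<in> set_pmf (wf_times N n q eps x0 K)"
  shows "fst p \<le> snd p \<and> snd p \<le> Suc K"
proof -
  from assms obtain d x L Th Tih where
    run: "(x, L, Th, Tih) \<in> set_pmf (wf_run N q eps d K 0 (x0, 0, None, None))"
    and p: "p = (case Th of Some t \<Rightarrow> t | None \<Rightarrow> Suc K, case Tih of Some t \<Rightarrow> t | None \<Rightarrow> Suc K)"
    unfolding wf_times_def by auto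
  have "hit_times_ordered K (x, L, Th, Tih)"
    using hit_times_ordered_wf_run[OF _ run] by (simp add: hit_times_ordered_def)
  then show ?thesis
    unfolding p hit_times_ordered_def by (auto split: option.splits)
qed

lemma intentional_hit_wf_run_fixed:
  "map_pmf (\<lambda>(_, _, _, Tih). Tih) (wf_run N q eps d k t (x, L, Th, Some b)) = return_pmf (Some b)"
proof (induction k arbitrary: t x L Th)
  case (Suc k)
  have "map_pmf (\<lambda>(_, _, _, Tih). Tih) (wf_run N q eps d (Suc k) t (x, L, Th, Some b))
      = bind_pmf (wf_step N q eps d t (x, L, Th, Some b)) (\<lambda>_. return_pmf (Some b))"
    unfolding wf_run.simps map_bind_pmf
  proof (rule bind_pmf_cong[OF refl])
    fix s' assume "s' \<in> set_pmf (wf_step N q eps d t (x, L, Th, Some b))"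
    then obtain x' L' Th' where "s' = (x', L', Th', Some b)"
      by (rule set_pmf_wf_step) simp
    then show "map_pmf (\<lambda>(_, _, _, Tih). Tih) (wf_run N q eps d k (Suc t) s') = return_pmf (Some b)"
      using Suc.IH by simp
  qed
  then show ?case by simp
qed simp

locale water_filling =
  fixes q eps :: real
  assumes eps_nonneg: "0 \<le> eps" and eps_less_1: "eps < 1" and q_pos: "0 < q"
    and tstar_integral: "1 / q - eps / (1 - eps) \<in> \<int>"
begin

definition fill_len :: nat where
  "fill_len = nat (wf_tstar q eps - 1)"

lemma wf_p_eq: "wf_p q eps t = (if t < fill_len then q / ((1 - eps) * (1 - real t * q)) else 1)"
  unfolding wf_p_def fill_len_def by (auto simp: divide_inverse)

lemma of_int_wf_tstar: "real_of_int (wf_tstar q eps) = 1 / q - eps / (1 - eps)"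
  using tstar_integral unfolding wf_tstar_def by (auto elim: Ints_cases)

(* The only place where integrality of t* is used. *)
lemma one_minus_fill_len_mult_q:
  assumes "1 \<le> wf_tstar q eps"
  shows "1 - real fill_len * q = q / (1 - eps)"
proof -
  have "real fill_len = 1 / q - eps / (1 - eps) - 1"
    using assms of_int_wf_tstar unfolding fill_len_def by simp
  then show ?thesis
    using q_pos eps_less_1 by (simp add: field_simps)
qed

lemma one_minus_mult_q_ge:
  assumes "t \<le> fill_len" "0 < fill_len"
  shows "q / (1 - eps) \<le> 1 - real t * q"
proof -
  have "real t * q \<le> real fill_len * q"
    using assms(1) q_pos by (simp add: mult_right_mono)
  moreover have "1 \<le> wf_tstar q eps"
    using assms(2) unfolding fill_len_def by simp
  ultimately show ?thesis
    using one_minus_fill_len_mult_q by simp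
qed

lemma one_minus_mult_q_pos:
  assumes "t \<le> fill_len" "0 < fill_len"
  shows "0 < 1 - real t * q"
  using one_minus_mult_q_ge[OF assms] q_pos eps_less_1 by (smt (verit) divide_pos_pos)

lemma wf_p_nonneg: "0 \<le> wf_p q eps t"
  using one_minus_mult_q_pos[of t] q_pos eps_less_1 by (auto simp: wf_p_eq intro!: divide_nonneg_pos)

lemma wf_p_le_1: "wf_p q eps t \<le> 1"
  using one_minus_mult_q_ge[of t] one_minus_mult_q_pos[of t] eps_less_1
  by (simp add: wf_p_eq divide_le_eq mult.commute pos_divide_le_eq)

definition hazard :: "nat \<Rightarrow> real" where
  "hazard t = wf_p q eps t * (1 - eps)"

lemma hazard_nonneg: "0 \<le> hazard t"
  using wf_p_nonneg eps_less_1 unfolding hazard_def by simp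

lemma hazard_le_1: "hazard t \<le> 1"
  using wf_p_nonneg wf_p_le_1 eps_nonneg eps_less_1 unfolding hazard_def by (simp add: mult_le_one)

lemma hazard_eq: "hazard t = (if t < fill_len then q / (1 - real t * q) else 1 - eps)"
  using eps_less_1 unfolding hazard_def wf_p_eq by simp

(* P(T_IH > s) is 1 - s q for s <= fill_len and then decays by the factor eps per step, so
   tail_mass t sums the survival probabilities over s >= t (for t <= fill_len) and
   expected_remaining t = E(T_IH - t | T_IH > t). *)
definition tail_mass :: "nat \<Rightarrow> real" where
  "tail_mass t = (\<Sum>s\<in>{t..<fill_len}. 1 - real s * q) + (1 - real fill_len * q) / (1 - eps)"

definition expected_remaining :: "nat \<Rightarrow> real" where
  "expected_remaining t = (if t < fill_len then tail_mass t / (1 - real t * q) else 1 / (1 - eps))"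

lemma tail_mass_Suc: "t < fill_len \<Longrightarrow> tail_mass t = (1 - real t * q) + tail_mass (Suc t)"
  unfolding tail_mass_def by (simp add: sum.atLeast_Suc_lessThan)

lemma one_minus_fill_len_mult_q_pos: "0 < 1 - real fill_len * q"
  using one_minus_mult_q_pos[of fill_len] by (cases "fill_len = 0") auto

lemma tail_mass_nonneg: "0 \<le> tail_mass t"
proof -
  have "0 \<le> 1 - real s * q" if "s \<in> {t..<fill_len}" for s
    using that one_minus_mult_q_pos[of s] by simp
  then show ?thesis
    unfolding tail_mass_def using one_minus_fill_len_mult_q_pos eps_less_1
    by (intro add_nonneg_nonneg sum_nonneg divide_nonneg_pos) auto
qed

lemma expected_remaining_eq:
  assumes "t \<le> fill_len"
  shows "expected_remaining t = tail_mass t / (1 - real t * q)"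
proof (cases "t < fill_len")
  case False
  then have "t = fill_len" using assms by simp
  with one_minus_fill_len_mult_q_pos show ?thesis
    by (simp add: expected_remaining_def tail_mass_def)
qed (simp add: expected_remaining_def)

lemma expected_remaining_nonneg: "0 \<le> expected_remaining t"
  using tail_mass_nonneg[of t] one_minus_mult_q_pos[of t] eps_less_1
  by (auto simp: expected_remaining_def intro!: divide_nonneg_pos)

lemma expected_remaining_recurrence:
  "1 + (1 - hazard t) * expected_remaining (Suc t) = expected_remaining t"
proof (cases "t < fill_len")
  case True
  have pos: "0 < 1 - real t * q" "0 < 1 - real (Suc t) * q"
    using True one_minus_mult_q_pos[of t] one_minus_mult_q_pos[of "Suc t"] by simp_all
  have "1 - hazard t = (1 - real (Suc t) * q) / (1 - real t * q)"
    using True pos(1) by (simp add: hazard_eq field_simps)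
  moreover have "expected_remaining (Suc t) = tail_mass (Suc t) / (1 - real (Suc t) * q)"
    using True by (simp add: expected_remaining_eq)
  ultimately have "(1 - hazard t) * expected_remaining (Suc t) = tail_mass (Suc t) / (1 - real t * q)"
    using pos(2) by simp
  then show ?thesis
    using True pos(1) tail_mass_Suc[OF True] by (simp add: expected_remaining_def field_simps)
next
  case False
  then show ?thesis
    using eps_less_1 by (simp add: hazard_eq expected_remaining_def field_simps)
qed

lemma expected_remaining_0_le:
  "expected_remaining 0 \<le> 1 / (2 * q) + 1 / 2 + q * eps / (2 * (1 - eps)^2)"
proof -
  define a where "a = 1 - eps"
  have a: "0 < a" "eps = 1 - a"
    using eps_less_1 by (simp_all add: a_def)
  show ?thesis
  proof (cases "1 \<le> wf_tstar q eps")
    case True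
    have fill_len: "real fill_len = (1 - q / a) / q"
      using one_minus_fill_len_mult_q[OF True] q_pos by (simp add: a_def field_simps)
    have gauss: "(\<Sum>s<m. real s) = real m * (real m - 1) / 2" for m
      by (induction m) (simp_all add: field_simps)
    have "expected_remaining 0 = tail_mass 0"
      by (simp add: expected_remaining_eq)
    also have "\<dots> = real fill_len - q * (real fill_len * (real fill_len - 1) / 2) + q / a^2"
      unfolding tail_mass_def one_minus_fill_len_mult_q[OF True] a_def
      by (simp add: sum_subtractf sum_distrib_right[symmetric] gauss atLeast0LessThan power2_eq_square)
    also have "\<dots> = 1 / (2 * q) + 1 / 2 + q * eps / (2 * (1 - eps)^2)"
      unfolding fill_len using q_pos a(1) by (simp add: a(2) field_simps power2_eq_square)
    finally show ?thesis by simp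
  next
    case False
    have "1 / q \<le> (1 - a) / a"
      using False of_int_wf_tstar by (simp add: a_def)
    then have "a * (1 + q) \<le> q"
      using q_pos a(1) by (simp add: field_simps)
    moreover have "a \<le> a * (1 + q)"
      using q_pos a(1) by simp
    \<comment> \<open>2 q a^2 times the gap between the bound and 1 / a is this product\<close>
    ultimately have "0 \<le> (a * (1 + q) - q) * (a - q)"
      by (intro mult_nonpos_nonpos) auto
    have "expected_remaining 0 = 1 / a"
      using False by (simp add: fill_len_def expected_remaining_def a_def)
    also have "\<dots> = (2 * q * a) / (2 * q * a^2)"
      using q_pos a(1) by (simp add: power2_eq_square)
    also have "\<dots> \<le> (a^2 + q * a^2 + q^2 * (1 - a)) / (2 * q * a^2)"
      using \<open>0 \<le> (a * (1 + q) - q) * (a - q)\<close> q_pos a(1)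
      by (intro divide_right_mono) (auto simp: algebra_simps power2_eq_square)
    also have "\<dots> = 1 / (2 * q) + 1 / 2 + q * eps / (2 * (1 - eps)^2)"
      unfolding a(2) using q_pos a(1) by (simp add: field_simps power2_eq_square)
    finally show ?thesis .
  qed
qed

lemma intentional_hit_wf_run_complete:
  assumes "d < n" "x < n"
  shows "map_pmf (\<lambda>(_, _, _, Tih). Tih) (wf_run (complete_nbhd n) q eps d k t (x, t, Th, None))
       = first_success hazard k t"
  using assms(2)
proof (induction k arbitrary: t x Th)
  case (Suc k)
  define g where "g r = (case r of None \<Rightarrow> first_success hazard k (Suc t) | Some b \<Rightarrow> return_pmf (Some b))"
    for r :: "nat option"
  have "map_pmf (\<lambda>(_, _, _, Tih). Tih) (wf_run (complete_nbhd n) q eps d (Suc k) t (x, t, Th, None))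
      = bind_pmf (wf_step (complete_nbhd n) q eps d t (x, t, Th, None)) (\<lambda>(_, _, _, Tih). g Tih)"
    unfolding wf_run.simps map_bind_pmf
  proof (rule bind_pmf_cong[OF refl])
    fix s' assume "s' \<in> set_pmf (wf_step (complete_nbhd n) q eps d t (x, t, Th, None))"
    then obtain x' hit where "x' = d \<or> x' \<in> set_pmf (pmf_of_set (complete_nbhd n x))"
      and s': "s' = (x', t + (if x' \<in> complete_nbhd n d then 1 else 0),
                    if Th = None \<and> x' = d then Some (Suc t) else Th, if hit then Some (Suc t) else None)"
      by (rule set_pmf_wf_step) simp
    moreover have "set_pmf (pmf_of_set {..<n}) = {..<n}"
      using Suc.prems by (intro set_pmf_of_set) auto
    ultimately have "x' < n"
      using assms(1) by (auto simp: complete_nbhd_def)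
    then show "map_pmf (\<lambda>(_, _, _, Tih). Tih) (wf_run (complete_nbhd n) q eps d k (Suc t) s')
             = (\<lambda>(_, _, _, Tih). g Tih) s'"
      unfolding s' g_def
      by (simp add: complete_nbhd_def Suc.IH intentional_hit_wf_run_fixed)
  qed
  also have "\<dots> = bind_pmf (bernoulli_pmf (wf_p q eps t)) (\<lambda>a. bind_pmf (bernoulli_pmf (1 - eps))
                      (\<lambda>b. g (if a \<and> b then Some (Suc t) else None)))"
    using assms(1) Suc.prems unfolding wf_step_def complete_nbhd_def
    by (simp add: bind_assoc_pmf bind_return_pmf)
  also have "\<dots> = bind_pmf (bernoulli_pmf (hazard t)) (\<lambda>c. g (if c then Some (Suc t) else None))"
    unfolding hazard_def using wf_p_nonneg wf_p_le_1 eps_nonneg eps_less_1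
    by (intro bind_bernoulli_pmf_conj[where f = "\<lambda>c. g (if c then Some (Suc t) else None)"]) auto
  also have "\<dots> = first_success hazard (Suc k) t"
    unfolding g_def first_success.simps by (intro bind_pmf_cong) auto
  finally show ?case .
qed simp

lemma intentional_hit_wf_times_complete:
  assumes "1 \<le> n" "x0 < n"
  shows "map_pmf snd (wf_times (complete_nbhd n) n q eps x0 K)
       = map_pmf (\<lambda>r. case r of Some t \<Rightarrow> t | None \<Rightarrow> Suc K) (first_success hazard K 0)"
proof -
  have support: "set_pmf (pmf_of_set {..<n}) = {..<n}"
    using assms(1) by (simp add: set_pmf_of_set lessThan_empty_iff)
  have "map_pmf snd (wf_times (complete_nbhd n) n q eps x0 K)
      = bind_pmf (pmf_of_set {..<n}) (\<lambda>d. map_pmf (\<lambda>r. case r of Some t \<Rightarrow> t | None \<Rightarrow> Suc K)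
          (map_pmf (\<lambda>(_, _, _, Tih). Tih) (wf_run (complete_nbhd n) q eps d K 0 (x0, 0, None, None))))"
    unfolding wf_times_def map_bind_pmf map_pmf_comp by (intro bind_pmf_cong) (auto simp: case_prod_beta)
  also have "\<dots> = bind_pmf (pmf_of_set {..<n}) (\<lambda>_. map_pmf (\<lambda>r. case r of Some t \<Rightarrow> t | None \<Rightarrow> Suc K)
                      (first_success hazard K 0))"
    using assms(2) support by (intro bind_pmf_cong) (auto simp: intentional_hit_wf_run_complete)
  finally show ?thesis by simp
qed

end

theorem lemma2:
  fixes n x0 K :: nat and eps q :: real
  assumes "n \<ge> 1" and "x0 < n"
    and "0 \<le> eps" and "eps < 1"
    and "0 < q" and "q \<le> 1"
    and "1 / q - eps / (1 - eps) \<in> \<int>"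
  shows "measure_pmf.expectation (wf_times (complete_nbhd n) n q eps x0 K) (\<lambda>p. real (fst p))
           \<le> measure_pmf.expectation (wf_times (complete_nbhd n) n q eps x0 K) (\<lambda>p. real (snd p))
       \<and> measure_pmf.expectation (wf_times (complete_nbhd n) n q eps x0 K) (\<lambda>p. real (snd p))
           \<le> 1 / (2 * q) + 1 / 2 + q * eps / (2 * (1 - eps)^2)"
proof -
  interpret water_filling q eps
    using assms(3-5,7) by unfold_locales
  define W where "W = wf_times (complete_nbhd n) n q eps x0 K"
  have ordered: "fst p \<le> snd p \<and> snd p \<le> Suc K" if "p \<in> set_pmf W" for p
    using that unfolding W_def by (rule hit_le_intentional_hit_wf_times)
  have "finite (set_pmf W)"
    by (rule finite_subset[of _ "{..Suc K} \<times> {..Suc K}"]) (auto dest: ordered)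
  then have hit_le:
      "measure_pmf.expectation W (\<lambda>p. real (fst p)) \<le> measure_pmf.expectation W (\<lambda>p. real (snd p))"
    using ordered by (intro integral_mono_AE integrable_measure_pmf_finite) (auto simp: AE_measure_pmf_iff)
  have "measure_pmf.expectation W (\<lambda>p. real (snd p)) = measure_pmf.expectation (map_pmf snd W) real"
    by simp
  also have "\<dots> = measure_pmf.expectation (first_success hazard K 0)
                     (\<lambda>r. real (case r of Some t \<Rightarrow> t | None \<Rightarrow> Suc K))"
    unfolding W_def intentional_hit_wf_times_complete[OF assms(1,2)] by simp
  also have "\<dots> \<le> real 0 + expected_remaining 0"
    using expectation_first_success_le[of hazard expected_remaining K 0] hazard_nonneg hazard_le_1
      expected_remaining_nonneg expected_remaining_recurrence
    unfolding add_0 by simp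
  also have "\<dots> \<le> 1 / (2 * q) + 1 / 2 + q * eps / (2 * (1 - eps)^2)"
    using expected_remaining_0_le by simp
  finally show ?thesis
    using hit_le unfolding W_def by simp
qed

end
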